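(* Let $\chi,b,\nu,\mu>0$ with $b\ge\frac32\chi\mu$, and $c\in\mathbb{R}$. Let $r$ be globally Hölder continuous and bounded with $r^*:=\sup_{\mathbb{R}}r>0$, finite limits $r(\pm\infty)<0$, and $\min\{r(\infty),r(-\infty)\}\le r(x)$ for all $x$. Fix $\bar r$ with $\max\{r(-\infty),r(\infty)\}<\bar r<0$, a point $\bar x$ with $r(x)<\bar r$ for all $x<\bar x$, a point $\tilde x$ with $r(x)<\bar r$ for all $x>\tilde x$, let $\bar\theta$ be the positive root of $\theta^2+c\theta+\bar r=0$ and $\tilde\theta$ the positive root of $\theta^2-c\theta+\bar r=0$. Then for every $u\in\mathcal{E}_2^+$: $\mathcal{A}_u\big(\frac{r^*}{b-\chi\mu}e^{\bar\theta(\cdot-\bar x)}\big)(x)\le0$ for $x\in(-\infty,\bar x)$; $\mathcal{A}_u\big(\frac{r^*}{b-\chi\mu}\big)(x)\le0$ for $x\in\mathbb{R}$; and $\mathcal{A}_u\big(\frac{r^*}{b-\chi\mu}e^{-\tilde\theta(\cdot-\tilde x)}\big)(x)\le0$ for $x\in(\tilde x,\infty)$.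
   Context: $C^b_{\rm unif}(\mathbb{R})$: bounded uniformly continuous functions on $\mathbb{R}$. $\Psi(x;u)=\frac{\mu}{2\sqrt\nu}\int_{\mathbb{R}}e^{-\sqrt\nu|x-y|}u(y)dy$ (bounded solution of $\Psi''-\nu\Psi+\mu u=0$). $U_2^+(x)=\frac{r^*}{b-\chi\mu}e^{\bar\theta(x-\bar x)}$ for $x<\bar x$, $=\frac{r^*}{b-\chi\mu}$ for $\bar x\le x\le\tilde x$, $=\frac{r^*}{b-\chi\mu}e^{-\tilde\theta(x-\tilde x)}$ for $x>\tilde x$; $\mathcal{E}_2^+=\{u\in C^b_{\rm unif}(\mathbb{R}):0\le u(x)\le U_2^+(x)\ \forall x\}$. For $u\in\mathcal{E}_2^+$, $\mathcal{A}_u(U)(x)=U_{xx}+(c-\chi\Psi_x(x;u))U_x+(r(x)-\chi\nu\Psi(x;u)-(b-\chi\mu)U)U$. *)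

theory Defs
  imports "HOL-Analysis.Analysis"
begin

definition holder_continuous :: "(real \<Rightarrow> real) \<Rightarrow> bool" where
  "holder_continuous f \<longleftrightarrow>
     (\<exists>\<alpha> L. 0 < \<alpha> \<and> \<alpha> \<le> 1 \<and> 0 \<le> L \<and> (\<forall>x y. \<bar>f x - f y\<bar> \<le> L * \<bar>x - y\<bar> powr \<alpha>))"

definition Cb_unif :: "(real \<Rightarrow> real) set" where
  "Cb_unif = {u. bounded (range u) \<and> uniformly_continuous_on UNIV u}"

definition Psi :: "real \<Rightarrow> real \<Rightarrow> (real \<Rightarrow> real) \<Rightarrow> real \<Rightarrow> real" where
  "Psi \<nu> \<mu> u x = \<mu> / (2 * sqrt \<nu>) * (\<integral>y. exp (- sqrt \<nu> * \<bar>x - y\<bar>) * u y \<partial>lborel)"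

definition U2plus :: "real \<Rightarrow> real \<Rightarrow> real \<Rightarrow> real \<Rightarrow> real \<Rightarrow> real \<Rightarrow> real \<Rightarrow> real \<Rightarrow> real \<Rightarrow> real" where
  "U2plus rs b chi \<mu> \<theta>b xb \<theta>t xt x =
     (if x < xb then rs / (b - chi * \<mu>) * exp (\<theta>b * (x - xb))
      else if x \<le> xt then rs / (b - chi * \<mu>)
      else rs / (b - chi * \<mu>) * exp (- \<theta>t * (x - xt)))"

definition E2plus :: "real \<Rightarrow> real \<Rightarrow> real \<Rightarrow> real \<Rightarrow> real \<Rightarrow> real \<Rightarrow> real \<Rightarrow> real \<Rightarrow> (real \<Rightarrow> real) set" where
  "E2plus rs b chi \<mu> \<theta>b xb \<theta>t xt =
     {u \<in> Cb_unif. \<forall>x. 0 \<le> u x \<and> u x \<le> U2plus rs b chi \<mu> \<theta>b xb \<theta>t xt x}"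

definition Aop :: "real \<Rightarrow> real \<Rightarrow> real \<Rightarrow> real \<Rightarrow> real \<Rightarrow> (real \<Rightarrow> real) \<Rightarrow> (real \<Rightarrow> real)
                    \<Rightarrow> (real \<Rightarrow> real) \<Rightarrow> real \<Rightarrow> real" where
  "Aop chi \<mu> \<nu> b c r u U x =
     deriv (deriv U) x + (c - chi * deriv (Psi \<nu> \<mu> u) x) * deriv U x
     + (r x - chi * \<nu> * Psi \<nu> \<mu> u x - (b - chi * \<mu>) * U x) * U x"

end

theory Submission
  imports Defs
begin

(* With s = sqrt nu, Psi(.;u) = mu/(2s) (L + R), where L and R are the one-sided
   convolutions L(x) = int_{y<x} e^{-s(x-y)} u(y) dy and R(x) = int_{y>x} e^{-s(y-x)} u(y) dy;
   hence Psi' = mu/2 (R - L).  For U(y) = K e^{theta (y - x0)} one finds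
     A_u(U) = U (theta^2 + c theta + r - chi (theta Psi' + nu Psi) - (b - chi mu) U),
     theta Psi' + nu Psi = mu/2 ((s + theta) R + (s - theta) L).
   Left of xb the bound u(y) <= K e^{theta (y - xb)} gives (s + theta) L <= U, so
   theta Psi' + nu Psi >= -mu/2 U; as theta^2 + c theta + r < 0 there and b - chi mu >= chi mu/2,
   the bracket is nonpositive.  Right of xt the argument is the mirror image, and for the
   constant K = r*/(b - chi mu) the bracket is r - chi nu Psi - r* <= 0 because Psi >= 0. *)

lemma has_integral_exp_from_minus_infinity:
  fixes a x :: real
  assumes "0 < a"
  shows "((\<lambda>y. exp (a * y)) has_integral exp (a * x) / a) {..x}"
proof -
  have "((\<lambda>y. exp (- a * y)) has_integral exp (a * x) / a) {-x..}"
    using has_integral_exp_minus_to_infinity[OF assms, of "-x"] by simp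
  moreover from this have "(\<lambda>y. exp (- a * y)) absolutely_integrable_on {-x..}"
    by (intro nonnegative_absolutely_integrable_1) (auto simp: integrable_on_def)
  ultimately have "(\<lambda>y. exp (a * y)) absolutely_integrable_on {..x}
      \<and> integral {..x} (\<lambda>y. exp (a * y)) = exp (a * x) / a"
    using has_absolute_integral_reflect_real[of "{-x..}" "{..x}" "\<lambda>y. exp (a * y)"]
    by (auto dest: integral_unique)
  then show ?thesis
    by (metis absolutely_integrable_on_def has_integral_integral)
qed

lemma exp_mult_integrable_on_atMost:
  fixes a x M :: real and u :: "real \<Rightarrow> real"
  assumes "0 < a" "continuous_on UNIV u" "\<And>y. \<bar>u y\<bar> \<le> M"
  shows "(\<lambda>y. exp (a * y) * u y) integrable_on {..x}"
proof (rule measurable_bounded_by_integrable_imp_integrable_real)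
  show "(\<lambda>y. exp (a * y) * u y) \<in> borel_measurable (lebesgue_on {..x})"
    using assms(2)
    by (intro continuous_imp_measurable_on_sets_lebesgue continuous_intros)
      (auto intro: continuous_on_subset)
  show "(\<lambda>y. M * exp (a * y)) integrable_on {..x}"
    using has_integral_exp_from_minus_infinity[OF assms(1)]
    by (intro integrable_on_mult_right) (auto simp: integrable_on_def)
  show "\<bar>exp (a * y) * u y\<bar> \<le> M * exp (a * y)" for y
    using assms(3)[of y] by (simp add: abs_mult mult.commute)
qed auto

lemma exp_mult_integrable_on_atLeast:
  fixes a x M :: real and u :: "real \<Rightarrow> real"
  assumes "0 < a" "continuous_on UNIV u" "\<And>y. \<bar>u y\<bar> \<le> M"
  shows "(\<lambda>y. exp (- a * y) * u y) integrable_on {x..}"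
proof (rule measurable_bounded_by_integrable_imp_integrable_real)
  show "(\<lambda>y. exp (- a * y) * u y) \<in> borel_measurable (lebesgue_on {x..})"
    using assms(2)
    by (intro continuous_imp_measurable_on_sets_lebesgue continuous_intros)
      (auto intro: continuous_on_subset)
  show "(\<lambda>y. M * exp (- a * y)) integrable_on {x..}"
    using integrable_on_exp_minus_to_infinity[OF assms(1)]
    by (rule integrable_on_mult_right)
  show "\<bar>exp (- a * y) * u y\<bar> \<le> M * exp (- a * y)" for y
    using assms(3)[of y] by (simp add: abs_mult mult.commute)
qed auto

lemma integral_atMost_has_real_derivative:
  fixes g :: "real \<Rightarrow> real"
  assumes g: "continuous_on UNIV g" and integrable: "\<And>a. g integrable_on {..a}"
  shows "((\<lambda>z. integral {..z} g) has_real_derivative g x) (at x)"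
proof -
  have "((\<lambda>z. integral {x - 1..z} g) has_real_derivative g x) (at x within {x - 1..x + 1})"
    using g by (intro integral_has_real_derivative) (auto intro: continuous_on_subset)
  then have "((\<lambda>z. integral {..x - 1} g + integral {x - 1..z} g) has_real_derivative g x) (at x)"
    by (auto simp: at_within_Icc_at intro!: derivative_eq_intros)
  then show ?thesis
  proof (rule has_field_derivative_transform_within_open)
    fix z assume "z \<in> {x - 1<..}"
    then have "integral ({..x - 1} \<union> {x - 1..z}) g = integral {..x - 1} g + integral {x - 1..z} g"
      using g integrable
      by (intro integral_Un integrable_continuous_interval)
        (auto intro: continuous_on_subset negligible_subset[of "{x - 1}"])
    moreover have "{..x - 1} \<union> {x - 1..z} = {..z}"
      using \<open>z \<in> {x - 1<..}\<close> by auto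
    ultimately show "integral {..x - 1} g + integral {x - 1..z} g = integral {..z} g"
      by simp
  qed auto
qed

lemma integral_atLeast_has_real_derivative:
  fixes g :: "real \<Rightarrow> real"
  assumes g: "continuous_on UNIV g" and integrable: "\<And>a. g integrable_on {a..}"
  shows "((\<lambda>z. integral {z..} g) has_real_derivative - g x) (at x)"
proof -
  have "((\<lambda>z. integral {z..x + 1} g) has_real_derivative - g x) (at x within {x - 1..x + 1})"
    using g by (intro integral_has_real_derivative') (auto intro: continuous_on_subset)
  then have "((\<lambda>z. integral {z..x + 1} g + integral {x + 1..} g) has_real_derivative - g x) (at x)"
    by (auto simp: at_within_Icc_at intro!: derivative_eq_intros)
  then show ?thesis
  proof (rule has_field_derivative_transform_within_open)
    fix z assume "z \<in> {..<x + 1}"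
    then have "integral ({z..x + 1} \<union> {x + 1..}) g = integral {z..x + 1} g + integral {x + 1..} g"
      using g integrable
      by (intro integral_Un integrable_continuous_interval)
        (auto intro: continuous_on_subset negligible_subset[of "{x + 1}"])
    moreover have "{z..x + 1} \<union> {x + 1..} = {z..}"
      using \<open>z \<in> {..<x + 1}\<close> by auto
    ultimately show "integral {z..x + 1} g + integral {x + 1..} g = integral {z..} g"
      by simp
  qed auto
qed

definition exp_conv_left :: "real \<Rightarrow> (real \<Rightarrow> real) \<Rightarrow> real \<Rightarrow> real" where
  "exp_conv_left s u x = integral {..x} (\<lambda>y. exp (- s * (x - y)) * u y)"

definition exp_conv_right :: "real \<Rightarrow> (real \<Rightarrow> real) \<Rightarrow> real \<Rightarrow> real" where
  "exp_conv_right s u x = integral {x..} (\<lambda>y. exp (- s * (y - x)) * u y)"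

lemma exp_conv_left_eq:
  "exp_conv_left s u x = exp (- s * x) * integral {..x} (\<lambda>y. exp (s * y) * u y)"
proof -
  have "exp (- s * (x - y)) = exp (- s * x) * exp (s * y)" for y
    by (simp add: algebra_simps flip: exp_add)
  then show ?thesis
    by (simp add: exp_conv_left_def mult.assoc)
qed

lemma exp_conv_right_eq:
  "exp_conv_right s u x = exp (s * x) * integral {x..} (\<lambda>y. exp (- s * y) * u y)"
proof -
  have "exp (- s * (y - x)) = exp (s * x) * exp (- s * y)" for y
    by (simp add: algebra_simps flip: exp_add)
  then show ?thesis
    by (simp add: exp_conv_right_def mult.assoc)
qed

lemma has_integral_exp_conv_left:
  assumes "0 < s" "continuous_on UNIV u" "\<And>y. \<bar>u y\<bar> \<le> M"
  shows "((\<lambda>y. exp (- s * (x - y)) * u y) has_integral exp_conv_left s u x) {..x}"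
proof -
  have "(\<lambda>y. exp (- s * x) * (exp (s * y) * u y)) integrable_on {..x}"
    using exp_mult_integrable_on_atMost[OF assms] by (rule integrable_on_mult_right)
  then have "(\<lambda>y. exp (- s * (x - y)) * u y) integrable_on {..x}"
    by (simp add: algebra_simps flip: exp_add)
  then show ?thesis
    unfolding exp_conv_left_def by (rule integrable_integral)
qed

lemma has_integral_exp_conv_right:
  assumes "0 < s" "continuous_on UNIV u" "\<And>y. \<bar>u y\<bar> \<le> M"
  shows "((\<lambda>y. exp (- s * (y - x)) * u y) has_integral exp_conv_right s u x) {x..}"
proof -
  have "(\<lambda>y. exp (s * x) * (exp (- s * y) * u y)) integrable_on {x..}"
    using exp_mult_integrable_on_atLeast[OF assms] by (rule integrable_on_mult_right)
  then have "(\<lambda>y. exp (- s * (y - x)) * u y) integrable_on {x..}"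
    by (simp add: algebra_simps flip: exp_add)
  then show ?thesis
    unfolding exp_conv_right_def by (rule integrable_integral)
qed

lemma has_integral_exp_abs_kernel:
  assumes "0 < s" "continuous_on UNIV u" "\<And>y. \<bar>u y\<bar> \<le> M"
  shows "((\<lambda>y. exp (- s * \<bar>x - y\<bar>) * u y) has_integral
           exp_conv_left s u x + exp_conv_right s u x) UNIV"
proof -
  have "((\<lambda>y. exp (- s * \<bar>x - y\<bar>) * u y) has_integral exp_conv_left s u x) {..x}"
    by (rule has_integral_eq[OF _ has_integral_exp_conv_left[OF assms]]) simp
  moreover have "((\<lambda>y. exp (- s * \<bar>x - y\<bar>) * u y) has_integral exp_conv_right s u x) {x..}"
    by (rule has_integral_eq[OF _ has_integral_exp_conv_right[OF assms]]) simp
  moreover have "{..x} \<inter> {x..} = {x}"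
    by auto
  moreover have "{..x} \<union> {x..} = UNIV"
    by auto
  ultimately show ?thesis
    by (metis has_integral_Un negligible_sing)
qed

lemma lborel_integral_exp_abs_kernel:
  assumes "0 < s" "continuous_on UNIV u" "\<And>y. \<bar>u y\<bar> \<le> M"
  shows "(\<integral>y. exp (- s * \<bar>x - y\<bar>) * u y \<partial>lborel) = exp_conv_left s u x + exp_conv_right s u x"
proof -
  define f where "f y = exp (- s * \<bar>x - y\<bar>) * u y" for y
  have f: "(f has_integral exp_conv_left s u x + exp_conv_right s u x) UNIV"
    unfolding f_def using has_integral_exp_abs_kernel[OF assms] .
  have "(\<lambda>y. norm (f y)) integrable_on UNIV"
    using assms has_integral_exp_abs_kernel[of s "\<lambda>y. \<bar>u y\<bar>" M x]
    by (auto simp: f_def abs_mult integrable_on_def intro: continuous_intros)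
  with f have "f absolutely_integrable_on UNIV"
    by (auto simp: absolutely_integrable_on_def integrable_on_def)
  then have "integrable lebesgue f"
    by (simp add: set_integrable_def)
  moreover have "f \<in> borel_measurable lborel"
    unfolding f_def using assms(2)
    by (simp, intro borel_measurable_continuous_onI continuous_intros)
  ultimately have "integral UNIV f = (\<integral>y. f y \<partial>lborel)"
    by (simp add: integral_lebesgue integral_completion)
  with f show ?thesis
    unfolding f_def by (metis integral_unique)
qed

lemma exp_conv_left_has_real_derivative:
  assumes "0 < s" "continuous_on UNIV u" "\<And>y. \<bar>u y\<bar> \<le> M"
  shows "(exp_conv_left s u has_real_derivative u x - s * exp_conv_left s u x) (at x)"
proof -
  have I: "((\<lambda>z. integral {..z} (\<lambda>y. exp (s * y) * u y)) has_real_derivative exp (s * x) * u x) (at x)"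
  proof (rule integral_atMost_has_real_derivative)
    show "continuous_on UNIV (\<lambda>y. exp (s * y) * u y)"
      using assms(2) by (intro continuous_intros)
    show "(\<lambda>y. exp (s * y) * u y) integrable_on {..a}" for a
      using assms by (rule exp_mult_integrable_on_atMost)
  qed
  have E: "((\<lambda>z. exp (- s * z)) has_real_derivative - s * exp (- s * x)) (at x)"
    by (auto intro!: derivative_eq_intros)
  have "(exp_conv_left s u has_real_derivative
      - s * exp (- s * x) * integral {..x} (\<lambda>y. exp (s * y) * u y) + exp (s * x) * u x * exp (- s * x))
      (at x)"
    unfolding exp_conv_left_eq[abs_def] using DERIV_mult[OF E I] by (simp add: mult.commute)
  moreover have "exp (s * x) * exp (- s * x) = 1"
    by (simp flip: exp_add)
  ultimately show ?thesis
    by (simp add: exp_conv_left_eq algebra_simps)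
qed

lemma exp_conv_right_has_real_derivative:
  assumes "0 < s" "continuous_on UNIV u" "\<And>y. \<bar>u y\<bar> \<le> M"
  shows "(exp_conv_right s u has_real_derivative s * exp_conv_right s u x - u x) (at x)"
proof -
  have I: "((\<lambda>z. integral {z..} (\<lambda>y. exp (- s * y) * u y)) has_real_derivative
      - (exp (- s * x) * u x)) (at x)"
  proof (rule integral_atLeast_has_real_derivative)
    show "continuous_on UNIV (\<lambda>y. exp (- s * y) * u y)"
      using assms(2) by (intro continuous_intros)
    show "(\<lambda>y. exp (- s * y) * u y) integrable_on {a..}" for a
      using assms by (rule exp_mult_integrable_on_atLeast)
  qed
  have E: "((\<lambda>z. exp (s * z)) has_real_derivative s * exp (s * x)) (at x)"
    by (auto intro!: derivative_eq_intros)
  have "(exp_conv_right s u has_real_derivative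
      s * exp (s * x) * integral {x..} (\<lambda>y. exp (- s * y) * u y) - exp (- s * x) * u x * exp (s * x))
      (at x)"
    unfolding exp_conv_right_eq[abs_def] using DERIV_mult[OF E I] by (simp add: mult.commute)
  moreover have "exp (- s * x) * exp (s * x) = 1"
    by (simp flip: exp_add)
  ultimately show ?thesis
    by (simp add: exp_conv_right_eq algebra_simps)
qed

lemma exp_conv_left_nonneg:
  assumes "0 < s" "continuous_on UNIV u" "\<And>y. \<bar>u y\<bar> \<le> M" "\<And>y. 0 \<le> u y"
  shows "0 \<le> exp_conv_left s u x"
  using has_integral_exp_conv_left[OF assms(1-3)]
  by (rule has_integral_nonneg) (simp add: assms(4))

lemma exp_conv_right_nonneg:
  assumes "0 < s" "continuous_on UNIV u" "\<And>y. \<bar>u y\<bar> \<le> M" "\<And>y. 0 \<le> u y"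
  shows "0 \<le> exp_conv_right s u x"
  using has_integral_exp_conv_right[OF assms(1-3)]
  by (rule has_integral_nonneg) (simp add: assms(4))

lemma exp_conv_left_le_exp:
  assumes "0 < s" "0 \<le> \<theta>" "continuous_on UNIV u" "\<And>y. \<bar>u y\<bar> \<le> M"
    and bound: "\<And>y. y \<le> x \<Longrightarrow> u y \<le> K * exp (\<theta> * (y - x0))"
  shows "(s + \<theta>) * exp_conv_left s u x \<le> K * exp (\<theta> * (x - x0))"
proof -
  define a where "a = s + \<theta>"
  define C where "C = K * exp (\<theta> * (x - x0)) * exp (- a * x)"
  have a: "0 < a"
    using assms(1,2) by (simp add: a_def)
  have "((\<lambda>y. C * exp (a * y)) has_integral C * (exp (a * x) / a)) {..x}"
    using has_integral_exp_from_minus_infinity[OF a] by (rule has_integral_mult_right)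
  moreover have "exp (- s * (x - y)) * u y \<le> C * exp (a * y)" if "y \<in> {..x}" for y
  proof -
    have "exp (- s * (x - y)) * u y \<le> exp (- s * (x - y)) * (K * exp (\<theta> * (y - x0)))"
      using bound that by (simp add: mult_left_mono)
    also have "\<dots> = C * exp (a * y)"
    proof -
      have "- s * (x - y) + \<theta> * (y - x0) = \<theta> * (x - x0) + - a * x + a * y"
        by (simp add: a_def algebra_simps)
      then show ?thesis
        by (simp add: C_def mult.left_commute mult.assoc flip: exp_add)
    qed
    finally show ?thesis .
  qed
  ultimately have "exp_conv_left s u x \<le> C * (exp (a * x) / a)"
    by (intro has_integral_le[OF has_integral_exp_conv_left[OF assms(1,3,4)]])
  also have "\<dots> = K * exp (\<theta> * (x - x0)) / a"
    by (simp add: C_def flip: exp_add)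
  finally show ?thesis
    using a by (simp add: a_def field_simps)
qed

lemma exp_conv_right_le_exp:
  assumes "0 < s" "0 \<le> \<theta>" "continuous_on UNIV u" "\<And>y. \<bar>u y\<bar> \<le> M"
    and bound: "\<And>y. x \<le> y \<Longrightarrow> u y \<le> K * exp (- \<theta> * (y - x0))"
  shows "(s + \<theta>) * exp_conv_right s u x \<le> K * exp (- \<theta> * (x - x0))"
proof -
  define a where "a = s + \<theta>"
  define C where "C = K * exp (- \<theta> * (x - x0)) * exp (a * x)"
  have a: "0 < a"
    using assms(1,2) by (simp add: a_def)
  have "((\<lambda>y. C * exp (- a * y)) has_integral C * (exp (- a * x) / a)) {x..}"
    using has_integral_exp_minus_to_infinity[OF a] by (rule has_integral_mult_right)
  moreover have "exp (- s * (y - x)) * u y \<le> C * exp (- a * y)" if "y \<in> {x..}" for y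
  proof -
    have "exp (- s * (y - x)) * u y \<le> exp (- s * (y - x)) * (K * exp (- \<theta> * (y - x0)))"
      using bound that by (simp add: mult_left_mono)
    also have "\<dots> = C * exp (- a * y)"
    proof -
      have "- s * (y - x) + - \<theta> * (y - x0) = - \<theta> * (x - x0) + a * x + - a * y"
        by (simp add: a_def algebra_simps)
      then show ?thesis
        by (simp add: C_def mult.left_commute mult.assoc flip: exp_add)
    qed
    finally show ?thesis .
  qed
  ultimately have "exp_conv_right s u x \<le> C * (exp (- a * x) / a)"
    by (intro has_integral_le[OF has_integral_exp_conv_right[OF assms(1,3,4)]])
  also have "\<dots> = K * exp (- \<theta> * (x - x0)) / a"
    by (simp add: C_def flip: exp_add)
  finally show ?thesis
    using a by (simp add: a_def field_simps)
qed

lemma Psi_eq_exp_conv: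
  assumes "0 < \<nu>" "continuous_on UNIV u" "\<And>y. \<bar>u y\<bar> \<le> M"
  shows "Psi \<nu> \<mu> u x
    = \<mu> / (2 * sqrt \<nu>) * (exp_conv_left (sqrt \<nu>) u x + exp_conv_right (sqrt \<nu>) u x)"
  using lborel_integral_exp_abs_kernel[of "sqrt \<nu>" u M x] assms by (simp add: Psi_def)

lemma Psi_nonneg:
  assumes "0 < \<nu>" "0 \<le> \<mu>" "continuous_on UNIV u" "\<And>y. \<bar>u y\<bar> \<le> M" "\<And>y. 0 \<le> u y"
  shows "0 \<le> Psi \<nu> \<mu> u x"
  using assms exp_conv_left_nonneg[of "sqrt \<nu>" u M] exp_conv_right_nonneg[of "sqrt \<nu>" u M]
  by (simp add: Psi_eq_exp_conv[OF assms(1,3,4)])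

lemma Psi_has_real_derivative:
  assumes "0 < \<nu>" "continuous_on UNIV u" "\<And>y. \<bar>u y\<bar> \<le> M"
  shows "(Psi \<nu> \<mu> u has_real_derivative
           \<mu> / 2 * (exp_conv_right (sqrt \<nu>) u x - exp_conv_left (sqrt \<nu>) u x)) (at x)"
proof -
  define s where "s = sqrt \<nu>"
  have s: "0 < s"
    using assms(1) by (simp add: s_def)
  have D: "((\<lambda>x. \<mu> / (2 * s) * (exp_conv_left s u x + exp_conv_right s u x)) has_real_derivative
      \<mu> / (2 * s) * ((u x - s * exp_conv_left s u x) + (s * exp_conv_right s u x - u x))) (at x)"
    using s assms(2,3)
    by (intro DERIV_cmult DERIV_add exp_conv_left_has_real_derivative exp_conv_right_has_real_derivative)
  have E: "\<mu> / (2 * s) * ((u x - s * exp_conv_left s u x) + (s * exp_conv_right s u x - u x))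
      = \<mu> / 2 * (exp_conv_right s u x - exp_conv_left s u x)"
    using s by (simp add: field_simps)
  have P: "Psi \<nu> \<mu> u = (\<lambda>x. \<mu> / (2 * s) * (exp_conv_left s u x + exp_conv_right s u x))"
    using Psi_eq_exp_conv[OF assms] by (auto simp: s_def)
  from D[unfolded E P[symmetric]] show ?thesis
    by (simp only: s_def)
qed

lemma Psi_exp_combination:
  assumes "0 < \<nu>" "continuous_on UNIV u" "\<And>y. \<bar>u y\<bar> \<le> M"
  shows "\<theta> * deriv (Psi \<nu> \<mu> u) x + \<nu> * Psi \<nu> \<mu> u x
    = \<mu> / 2 * ((sqrt \<nu> + \<theta>) * exp_conv_right (sqrt \<nu>) u x
                + (sqrt \<nu> - \<theta>) * exp_conv_left (sqrt \<nu>) u x)"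
proof -
  have "\<nu> * Psi \<nu> \<mu> u x
      = \<mu> / 2 * (\<nu> / sqrt \<nu>) * (exp_conv_left (sqrt \<nu>) u x + exp_conv_right (sqrt \<nu>) u x)"
    by (simp add: Psi_eq_exp_conv[OF assms])
  also have "\<nu> / sqrt \<nu> = sqrt \<nu>"
    using assms(1) by (simp add: real_div_sqrt)
  finally have nu_Psi: "\<nu> * Psi \<nu> \<mu> u x
      = \<mu> / 2 * sqrt \<nu> * (exp_conv_left (sqrt \<nu>) u x + exp_conv_right (sqrt \<nu>) u x)" .
  have deriv_Psi: "deriv (Psi \<nu> \<mu> u) x
      = \<mu> / 2 * (exp_conv_right (sqrt \<nu>) u x - exp_conv_left (sqrt \<nu>) u x)"
    by (rule DERIV_imp_deriv[OF Psi_has_real_derivative[OF assms]])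
  show ?thesis
    unfolding nu_Psi deriv_Psi by (simp add: field_simps)
qed

lemma Psi_exp_combination_ge_left:
  assumes "0 < \<nu>" "0 \<le> \<mu>" "0 \<le> \<theta>" "continuous_on UNIV u" "\<And>y. \<bar>u y\<bar> \<le> M" "\<And>y. 0 \<le> u y"
    and "\<And>y. y \<le> x \<Longrightarrow> u y \<le> K * exp (\<theta> * (y - x0))"
  shows "- \<mu> / 2 * (K * exp (\<theta> * (x - x0))) \<le> \<theta> * deriv (Psi \<nu> \<mu> u) x + \<nu> * Psi \<nu> \<mu> u x"
proof -
  define s where "s = sqrt \<nu>"
  define L where "L = exp_conv_left s u x"
  define R where "R = exp_conv_right s u x"
  have s: "0 < s"
    using assms(1) by (simp add: s_def)
  have "0 \<le> L" "0 \<le> R"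
    unfolding L_def R_def using s assms(4-6)
    by (blast intro: exp_conv_left_nonneg exp_conv_right_nonneg)+
  then have "0 \<le> (s + \<theta>) * R" "0 \<le> s * L"
    using s assms(3) by simp_all
  moreover have "(s + \<theta>) * L \<le> K * exp (\<theta> * (x - x0))"
    unfolding L_def using s assms(3-5,7) by (rule exp_conv_left_le_exp)
  moreover have "(s + \<theta>) * R + (s - \<theta>) * L = (s + \<theta>) * R + 2 * (s * L) - (s + \<theta>) * L"
    by (simp add: algebra_simps)
  ultimately have "- (K * exp (\<theta> * (x - x0))) \<le> (s + \<theta>) * R + (s - \<theta>) * L"
    by linarith
  then have "\<mu> / 2 * - (K * exp (\<theta> * (x - x0))) \<le> \<mu> / 2 * ((s + \<theta>) * R + (s - \<theta>) * L)"
    by (rule mult_left_mono) (simp add: assms(2))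
  then show ?thesis
    using Psi_exp_combination[OF assms(1,4,5), of \<theta> \<mu> x] by (simp add: s_def L_def R_def)
qed

lemma Psi_exp_combination_ge_right:
  assumes "0 < \<nu>" "0 \<le> \<mu>" "0 \<le> \<theta>" "continuous_on UNIV u" "\<And>y. \<bar>u y\<bar> \<le> M" "\<And>y. 0 \<le> u y"
    and "\<And>y. x \<le> y \<Longrightarrow> u y \<le> K * exp (- \<theta> * (y - x0))"
  shows "- \<mu> / 2 * (K * exp (- \<theta> * (x - x0))) \<le> - \<theta> * deriv (Psi \<nu> \<mu> u) x + \<nu> * Psi \<nu> \<mu> u x"
proof -
  define s where "s = sqrt \<nu>"
  define L where "L = exp_conv_left s u x"
  define R where "R = exp_conv_right s u x"
  have s: "0 < s"
    using assms(1) by (simp add: s_def)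
  have "0 \<le> L" "0 \<le> R"
    unfolding L_def R_def using s assms(4-6)
    by (blast intro: exp_conv_left_nonneg exp_conv_right_nonneg)+
  then have "0 \<le> (s + \<theta>) * L" "0 \<le> s * R"
    using s assms(3) by simp_all
  moreover have "(s + \<theta>) * R \<le> K * exp (- \<theta> * (x - x0))"
    unfolding R_def using s assms(3-5,7) by (rule exp_conv_right_le_exp)
  moreover have "(s - \<theta>) * R + (s + \<theta>) * L = (s + \<theta>) * L + 2 * (s * R) - (s + \<theta>) * R"
    by (simp add: algebra_simps)
  ultimately have "- (K * exp (- \<theta> * (x - x0))) \<le> (s - \<theta>) * R + (s + \<theta>) * L"
    by linarith
  then have "\<mu> / 2 * - (K * exp (- \<theta> * (x - x0))) \<le> \<mu> / 2 * ((s - \<theta>) * R + (s + \<theta>) * L)"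
    by (rule mult_left_mono) (simp add: assms(2))
  then show ?thesis
    using Psi_exp_combination[OF assms(1,4,5), of "- \<theta>" \<mu> x] by (simp add: s_def L_def R_def)
qed

lemma Aop_exp:
  "Aop chi \<mu> \<nu> b c r u (\<lambda>y. K * exp (\<theta> * (y - x0))) x
    = K * exp (\<theta> * (x - x0)) * (\<theta>\<^sup>2 + c * \<theta> + r x
        - chi * (\<theta> * deriv (Psi \<nu> \<mu> u) x + \<nu> * Psi \<nu> \<mu> u x)
        - (b - chi * \<mu>) * (K * exp (\<theta> * (x - x0))))"
proof -
  have "deriv (\<lambda>y. K * exp (\<theta> * (y - x0))) = (\<lambda>y. \<theta> * (K * exp (\<theta> * (y - x0))))"
    by (rule ext, rule DERIV_imp_deriv) (auto intro!: derivative_eq_intros)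
  moreover have "deriv (\<lambda>y. \<theta> * (K * exp (\<theta> * (y - x0)))) x = \<theta> * (\<theta> * (K * exp (\<theta> * (x - x0))))"
    by (rule DERIV_imp_deriv) (auto intro!: derivative_eq_intros)
  ultimately show ?thesis
    by (simp add: Aop_def algebra_simps power2_eq_square)
qed

lemma Aop_exp_nonpos:
  assumes "0 \<le> K" "0 \<le> chi" "3 / 2 * chi * \<mu> \<le> b" "\<theta>\<^sup>2 + c * \<theta> + r x \<le> 0"
    and "- \<mu> / 2 * (K * exp (\<theta> * (x - x0))) \<le> \<theta> * deriv (Psi \<nu> \<mu> u) x + \<nu> * Psi \<nu> \<mu> u x"
  shows "Aop chi \<mu> \<nu> b c r u (\<lambda>y. K * exp (\<theta> * (y - x0))) x \<le> 0"
proof -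
  define V where "V = K * exp (\<theta> * (x - x0))"
  have V: "0 \<le> V"
    using assms(1) by (simp add: V_def)
  have "chi * \<mu> / 2 \<le> b - chi * \<mu>"
    using assms(3) by linarith
  then have "chi * \<mu> / 2 * V \<le> (b - chi * \<mu>) * V"
    using V by (rule mult_right_mono)
  moreover have "chi * (- \<mu> / 2 * V) \<le> chi * (\<theta> * deriv (Psi \<nu> \<mu> u) x + \<nu> * Psi \<nu> \<mu> u x)"
    unfolding V_def using assms(5,2) by (rule mult_left_mono)
  ultimately have "\<theta>\<^sup>2 + c * \<theta> + r x - chi * (\<theta> * deriv (Psi \<nu> \<mu> u) x + \<nu> * Psi \<nu> \<mu> u x)
      - (b - chi * \<mu>) * V \<le> 0"
    using assms(4) by (simp add: algebra_simps)
  with V show ?thesis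
    by (simp add: Aop_exp V_def mult_nonneg_nonpos)
qed

lemma Aop_exp_nonpos_left:
  assumes "0 < \<nu>" "0 \<le> \<mu>" "0 \<le> chi" "3 / 2 * chi * \<mu> \<le> b" "0 \<le> \<theta>" "0 \<le> K"
    and "continuous_on UNIV u" "\<And>y. \<bar>u y\<bar> \<le> M" "\<And>y. 0 \<le> u y"
    and "\<And>y. y \<le> x \<Longrightarrow> u y \<le> K * exp (\<theta> * (y - x0))"
    and "\<theta>\<^sup>2 + c * \<theta> + r x \<le> 0"
  shows "Aop chi \<mu> \<nu> b c r u (\<lambda>y. K * exp (\<theta> * (y - x0))) x \<le> 0"
  using assms by (intro Aop_exp_nonpos Psi_exp_combination_ge_left) auto

lemma Aop_exp_nonpos_right:
  assumes "0 < \<nu>" "0 \<le> \<mu>" "0 \<le> chi" "3 / 2 * chi * \<mu> \<le> b" "0 \<le> \<theta>" "0 \<le> K"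
    and "continuous_on UNIV u" "\<And>y. \<bar>u y\<bar> \<le> M" "\<And>y. 0 \<le> u y"
    and "\<And>y. x \<le> y \<Longrightarrow> u y \<le> K * exp (- \<theta> * (y - x0))"
    and "\<theta>\<^sup>2 - c * \<theta> + r x \<le> 0"
  shows "Aop chi \<mu> \<nu> b c r u (\<lambda>y. K * exp (- \<theta> * (y - x0))) x \<le> 0"
  using assms by (intro Aop_exp_nonpos Psi_exp_combination_ge_right) auto

lemma Aop_const_nonpos:
  assumes "0 \<le> K" "0 \<le> chi" "0 \<le> \<nu>" "0 \<le> Psi \<nu> \<mu> u x" "r x \<le> (b - chi * \<mu>) * K"
  shows "Aop chi \<mu> \<nu> b c r u (\<lambda>y. K) x \<le> 0"
proof -
  have "0 \<le> chi * \<nu> * Psi \<nu> \<mu> u x"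
    using assms(2-4) by simp
  then have "r x - chi * \<nu> * Psi \<nu> \<mu> u x - (b - chi * \<mu>) * K \<le> 0"
    using assms(5) by linarith
  with assms(1) show ?thesis
    by (simp add: Aop_def mult_nonpos_nonneg)
qed

lemma le_if_below_level_outside:
  fixes r :: "real \<Rightarrow> real"
  assumes "bdd_above (range r)" "rbar < Sup (range r)"
    and "\<And>x. x < xb \<Longrightarrow> r x < rbar" "\<And>x. xt < x \<Longrightarrow> r x < rbar"
  shows "xb \<le> xt"
proof (rule ccontr)
  assume "\<not> xb \<le> xt"
  then have "r x \<le> rbar" for x
    using assms(3,4) by (cases "x < xb") (auto intro: less_imp_le)
  then have "Sup (range r) \<le> rbar"
    by (intro cSUP_least) auto
  with assms(2) show False
    by linarith
qed

theorem lemma4p1: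
  fixes chi b \<nu> \<mu> c :: real and r :: "real \<Rightarrow> real"
    and rp rm rbar xb xt \<theta>b \<theta>t :: real
  assumes "chi > 0" "b > 0" "\<nu> > 0" "\<mu> > 0"
    and "b \<ge> 3/2 * chi * \<mu>"
    and "holder_continuous r" "bounded (range r)"
    and "Sup (range r) > 0"
    and "(r \<longlongrightarrow> rp) at_top" "(r \<longlongrightarrow> rm) at_bot" "rp < 0" "rm < 0"
    and "\<And>x. min rp rm \<le> r x"
    and "max rm rp < rbar" "rbar < 0"
    and "\<And>x. x < xb \<Longrightarrow> r x < rbar"
    and "\<And>x. x > xt \<Longrightarrow> r x < rbar"
    and "\<theta>b > 0" "\<theta>b\<^sup>2 + c * \<theta>b + rbar = 0"
    and "\<theta>t > 0" "\<theta>t\<^sup>2 - c * \<theta>t + rbar = 0"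
    and "u \<in> E2plus (Sup (range r)) b chi \<mu> \<theta>b xb \<theta>t xt"
  shows "(\<forall>x < xb. Aop chi \<mu> \<nu> b c r u
            (\<lambda>y. Sup (range r) / (b - chi * \<mu>) * exp (\<theta>b * (y - xb))) x \<le> 0)
       \<and> (\<forall>x. Aop chi \<mu> \<nu> b c r u (\<lambda>y. Sup (range r) / (b - chi * \<mu>)) x \<le> 0)
       \<and> (\<forall>x > xt. Aop chi \<mu> \<nu> b c r u
            (\<lambda>y. Sup (range r) / (b - chi * \<mu>) * exp (- \<theta>t * (y - xt))) x \<le> 0)"
proof -
  define K where "K = Sup (range r) / (b - chi * \<mu>)"
  have "0 < chi * \<mu>"
    using assms(1,4) by simp
  then have "0 < b - chi * \<mu>"
    using assms(5) by linarith
  then have K: "0 < K" and bK: "(b - chi * \<mu>) * K = Sup (range r)"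
    using assms(8) by (simp_all add: K_def)
  have r_le: "r x \<le> (b - chi * \<mu>) * K" for x
    unfolding bK using assms(7) by (intro cSUP_upper) (auto simp: bounded_imp_bdd_above)
  have "xb \<le> xt"
    using assms(7,8,15-17) by (intro le_if_below_level_outside[of r rbar]) (auto simp: bounded_imp_bdd_above)
  from assms(22) have u: "continuous_on UNIV u" "bounded (range u)" "\<And>y. 0 \<le> u y"
    and u_le: "\<And>y. u y \<le> U2plus (Sup (range r)) b chi \<mu> \<theta>b xb \<theta>t xt y"
    by (auto simp: E2plus_def Cb_unif_def uniformly_continuous_imp_continuous)
  from u(2) obtain M where M: "\<And>y. \<bar>u y\<bar> \<le> M"
    by (auto simp: bounded_iff)
  have u_left: "u y \<le> K * exp (\<theta>b * (y - xb))" if "y < xb" for y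
    using u_le[of y] that by (simp add: U2plus_def K_def)
  have u_right: "u y \<le> K * exp (- \<theta>t * (y - xt))" if "xt < y" for y
    using u_le[of y] that \<open>xb \<le> xt\<close> by (simp add: U2plus_def K_def)
  have "Aop chi \<mu> \<nu> b c r u (\<lambda>y. K * exp (\<theta>b * (y - xb))) x \<le> 0" if "x < xb" for x
    using assms(1,3-5,18,19) assms(16)[OF that] K u(1,3) M u_left that
    by (intro Aop_exp_nonpos_left) auto
  moreover have "Aop chi \<mu> \<nu> b c r u (\<lambda>y. K * exp (- \<theta>t * (y - xt))) x \<le> 0" if "xt < x" for x
    using assms(1,3-5,20,21) assms(17)[OF that] K u(1,3) M u_right that
    by (intro Aop_exp_nonpos_right) auto
  moreover have "Aop chi \<mu> \<nu> b c r u (\<lambda>y. K) x \<le> 0" for x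
    using K assms(1,3,4) u(1,3) M r_le by (intro Aop_const_nonpos Psi_nonneg) auto
  ultimately show ?thesis
    unfolding K_def[symmetric] by blast
qed

end
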